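(* Let $G$ be a graph and let $P,Q$ be bicliques of $G$. If there is a biclique $R$ of $G$ that is mutually included with $P$ and mutually included with $Q$, then $P\cap Q\neq\emptyset$.
   Context: All graphs are finite and simple. A biclique of a graph $G$ is a set $P\subseteq V(G)$ such that the induced subgraph $G[P]$ is a complete bipartite graph with both parts nonempty, and $P$ is inclusion-maximal with this property. Since $G[P]$ is connected, its bipartition into two nonempty independent sets $X,Y$ (every vertex of $X$ adjacent to every vertex of $Y$) is unique; we write $P=XY$ to mean $P=X\cup Y$ with $X,Y$ these two parts, called the sides of $P$. Two bicliques $P,Q$ of $G$ are mutually included if their sides can be named $P=X_PY_P$, $Q=X_QY_Q$ so that $X_Q\subsetneq X_P$ and $Y_P\subsetneq Y_Q$. *)

theory Defs
  imports Main
begin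

definition simple_graph :: "'a set \<Rightarrow> ('a \<Rightarrow> 'a \<Rightarrow> bool) \<Rightarrow> bool" where
  "simple_graph V E \<longleftrightarrow> finite V \<and> (\<forall>x y. E x y \<longrightarrow> x \<in> V \<and> y \<in> V)
     \<and> (\<forall>x y. E x y \<longrightarrow> E y x) \<and> (\<forall>x. \<not> E x x)"

definition independent :: "('a \<Rightarrow> 'a \<Rightarrow> bool) \<Rightarrow> 'a set \<Rightarrow> bool" where
  "independent E S \<longleftrightarrow> (\<forall>x\<in>S. \<forall>y\<in>S. \<not> E x y)"

definition complete_bip :: "('a \<Rightarrow> 'a \<Rightarrow> bool) \<Rightarrow> 'a set \<Rightarrow> 'a set \<Rightarrow> bool" where
  "complete_bip E X Y \<longleftrightarrow> X \<noteq> {} \<and> Y \<noteq> {} \<and> X \<inter> Y = {}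
     \<and> independent E X \<and> independent E Y \<and> (\<forall>x\<in>X. \<forall>y\<in>Y. E x y)"

definition is_cbip_set :: "('a \<Rightarrow> 'a \<Rightarrow> bool) \<Rightarrow> 'a set \<Rightarrow> bool" where
  "is_cbip_set E P \<longleftrightarrow> (\<exists>X Y. P = X \<union> Y \<and> complete_bip E X Y)"

definition biclique :: "'a set \<Rightarrow> ('a \<Rightarrow> 'a \<Rightarrow> bool) \<Rightarrow> 'a set \<Rightarrow> bool" where
  "biclique V E P \<longleftrightarrow> P \<subseteq> V \<and> is_cbip_set E P
     \<and> (\<forall>P'. P \<subset> P' \<and> P' \<subseteq> V \<longrightarrow> \<not> is_cbip_set E P')"

definition mutually_included :: "('a \<Rightarrow> 'a \<Rightarrow> bool) \<Rightarrow> 'a set \<Rightarrow> 'a set \<Rightarrow> bool" where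
  "mutually_included E P Q \<longleftrightarrow> (\<exists>XP YP XQ YQ.
     P = XP \<union> YP \<and> complete_bip E XP YP \<and> Q = XQ \<union> YQ \<and> complete_bip E XQ YQ
     \<and> XQ \<subset> XP \<and> YP \<subset> YQ)"

end

theory Submission
  imports Defs
begin

text \<open>A biclique R mutually included with both P and Q carries two namings of its sides,
  R = X1 Y1 with Y1 \<subset> YP and R = X2 Y2 with XQ \<subset> X2 and Y2 \<subset> YQ.
  Since the bipartition of R is unique, either the namings agree, and then Y1 lies in
  P \<inter> Q, or they are swapped, and then XQ \<subset> X2 = Y1 lies in P \<inter> Q.\<close>

lemma complete_bip_side_containing:
  assumes XY: "complete_bip E X Y" and XY': "complete_bip E X' Y'"
    and same: "X \<union> Y = X' \<union> Y'" and x: "x \<in> X'" "x \<in> X"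
  shows "X' = X \<and> Y' = Y"
proof -
  have "X' \<subseteq> X"
  proof
    fix z assume "z \<in> X'"
    then have "\<not> E x z" using x XY' unfolding complete_bip_def independent_def by blast
    then show "z \<in> X" using \<open>z \<in> X'\<close> x same XY unfolding complete_bip_def by blast
  qed
  moreover have "Y' \<subseteq> Y"
  proof
    fix v assume "v \<in> Y'"
    then have "E x v" using x XY' unfolding complete_bip_def by blast
    then show "v \<in> Y" using \<open>v \<in> Y'\<close> x same XY unfolding complete_bip_def independent_def by blast
  qed
  moreover have "X \<inter> Y = {}" "X' \<inter> Y' = {}"
    using XY XY' unfolding complete_bip_def by auto
  ultimately show ?thesis using same by auto
qed

lemma complete_bip_swap:
  assumes "\<And>x y. E x y \<Longrightarrow> E y x" and "complete_bip E X Y"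
  shows "complete_bip E Y X"
  using assms unfolding complete_bip_def by blast

lemma complete_bip_sides_unique:
  assumes sym: "\<And>x y. E x y \<Longrightarrow> E y x"
    and XY: "complete_bip E X Y" and XY': "complete_bip E X' Y'"
    and same: "X \<union> Y = X' \<union> Y'"
  shows "(X' = X \<and> Y' = Y) \<or> (X' = Y \<and> Y' = X)"
proof -
  obtain x where x: "x \<in> X'" using XY' unfolding complete_bip_def by blast
  then consider "x \<in> X" | "x \<in> Y" using same by blast
  then show ?thesis
  proof cases
    case 1
    then show ?thesis using complete_bip_side_containing[OF XY XY' same x] by blast
  next
    case 2
    have "Y \<union> X = X' \<union> Y'" using same by blast
    then show ?thesis
      using complete_bip_side_containing[OF complete_bip_swap[OF sym XY] XY' _ x 2] by blast
  qed
qed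

theorem lemma2:
  assumes "simple_graph V E"
    and "biclique V E P" and "biclique V E Q" and "biclique V E R"
    and "mutually_included E R P" and "mutually_included E R Q"
  shows "P \<inter> Q \<noteq> {}"
proof -
  obtain X1 Y1 XP YP where RP: "R = X1 \<union> Y1" "complete_bip E X1 Y1" "P = XP \<union> YP"
      "Y1 \<subset> YP"
    using assms(5) unfolding mutually_included_def by blast
  obtain X2 Y2 XQ YQ where RQ: "R = X2 \<union> Y2" "complete_bip E X2 Y2" "Q = XQ \<union> YQ"
      "complete_bip E XQ YQ" "XQ \<subset> X2" "Y2 \<subset> YQ"
    using assms(6) unfolding mutually_included_def by blast
  have sym: "\<And>x y. E x y \<Longrightarrow> E y x" using assms(1) unfolding simple_graph_def by blast
  have "Y1 \<noteq> {}" "XQ \<noteq> {}" using RP(2) RQ(4) unfolding complete_bip_def by blast+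
  moreover have "(X2 = X1 \<and> Y2 = Y1) \<or> (X2 = Y1 \<and> Y2 = X1)"
    using complete_bip_sides_unique[OF sym RP(2) RQ(2)] RP(1) RQ(1) by simp
  ultimately show ?thesis using RP(3,4) RQ(3,5,6) by blast
qed

end
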